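(* Let $-2<k<2$ and $(x_0,y_0,z_0)\in E_k$. If the $\Gamma$-orbit of $(x_0,y_0,z_0)$ is infinite, then it is dense in $E_k$.
   Context: $M$ is a torus with one boundary component; $\pi_1(M)$ is free on $X,Y$, $K=XYX^{-1}Y^{-1}$. $E=\operatorname{Hom}(\pi_1(M),\mathrm{SU}(2))/\mathrm{SU}(2)$ is identified via $[\sigma]\mapsto(\operatorname{tr}\sigma(X),\operatorname{tr}\sigma(Y),\operatorname{tr}\sigma(XY))$ with $\{(x,y,z)\in[-2,2]^3:-2\le x^2+y^2+z^2-xyz-2\le2\}$, and $E_k=\{(x,y,z)\in E:x^2+y^2+z^2-xyz-2=k\}$, with the topology induced from $\mathbb{R}^3$. $\Gamma$ is the mapping class group of $M$ fixing $\partial M$; it acts on $E$ and is generated by $\tau_X(x,y,z)=(x,z,xz-y)$ and $\tau_Y(x,y,z)=(z,y,yz-x)$, which preserve each $E_k$. *)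

theory Defs
  imports "HOL-Analysis.Analysis"
begin

text \<open>Points of E are represented by their trace coordinates (x,y,z) in R^3,
  with the Euclidean (product) topology on real \<times> real \<times> real.\<close>

definition kappa :: "real \<times> real \<times> real \<Rightarrow> real" where
  "kappa p = (case p of (x, y, z) \<Rightarrow> x^2 + y^2 + z^2 - x*y*z - 2)"

definition E :: "(real \<times> real \<times> real) set" where
  "E = {(x, y, z). x \<in> {-2..2} \<and> y \<in> {-2..2} \<and> z \<in> {-2..2}
                   \<and> -2 \<le> kappa (x, y, z) \<and> kappa (x, y, z) \<le> 2}"

definition E_k :: "real \<Rightarrow> (real \<times> real \<times> real) set" where
  "E_k k = {p \<in> E. kappa p = k}"

definition tauX :: "real \<times> real \<times> real \<Rightarrow> real \<times> real \<times> real" where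
  "tauX p = (case p of (x, y, z) \<Rightarrow> (x, z, x*z - y))"

definition tauY :: "real \<times> real \<times> real \<Rightarrow> real \<times> real \<times> real" where
  "tauY p = (case p of (x, y, z) \<Rightarrow> (z, y, y*z - x))"

definition tauX_inv :: "real \<times> real \<times> real \<Rightarrow> real \<times> real \<times> real" where
  "tauX_inv p = (case p of (x, a, b) \<Rightarrow> (x, x*a - b, a))"

definition tauY_inv :: "real \<times> real \<times> real \<Rightarrow> real \<times> real \<times> real" where
  "tauY_inv p = (case p of (a, y, b) \<Rightarrow> (y*a - b, y, a))"

inductive_set Gamma_orbit :: "real \<times> real \<times> real \<Rightarrow> (real \<times> real \<times> real) set"
  for p where
  base: "p \<in> Gamma_orbit p"
| stepX: "q \<in> Gamma_orbit p \<Longrightarrow> tauX q \<in> Gamma_orbit p"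
| stepY: "q \<in> Gamma_orbit p \<Longrightarrow> tauY q \<in> Gamma_orbit p"
| stepXi: "q \<in> Gamma_orbit p \<Longrightarrow> tauX_inv q \<in> Gamma_orbit p"
| stepYi: "q \<in> Gamma_orbit p \<Longrightarrow> tauY_inv q \<in> Gamma_orbit p"

lemma tauX_inv_tauX: "tauX_inv (tauX p) = p" and tauX_tauX_inv: "tauX (tauX_inv p) = p"
  and tauY_inv_tauY: "tauY_inv (tauY p) = p" and tauY_tauY_inv: "tauY (tauY_inv p) = p"
  by (cases p; auto simp: tauX_def tauX_inv_def tauY_def tauY_inv_def)+

end

theory Submission
  imports Defs "HOL-Analysis.Kronecker_Approximation_Theorem"
begin

(*
  For |x| < 2 the points of E_k with first coordinate x form an ellipse, parametrised by
  slice_point k x t so that tauX acts on it as the rotation t |-> t + arccos (x / 2); swapping the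
  first two coordinates exchanges tauX and tauY.

  Suppose the first coordinates of the orbit accumulate at some a with |a| < sqrt (k + 2). Nearby
  first coordinates can be chosen whose rotation has no period <= N, and then, by Dirichlet's
  approximation theorem, their tauX-orbits are (2 pi / N)-dense in their slice; hence the closure of
  the orbit contains the whole slice through a. That slice crosses y = 0, so the same argument in
  the second coordinate puts the slice y = 0 into the closure; its first coordinates fill
  [-sqrt (k + 2), sqrt (k + 2)], so every slice lies in the closure, and tauY supplies the two
  poles (+-sqrt (k + 2), 0, 0).

  If neither coordinate accumulates inside (-sqrt (k + 2), sqrt (k + 2)), then 0 is isolated among
  the first coordinates of the orbit. A point (x, y, z) of the orbit close to one of the poles
  (+-sqrt (k + 2), 0, 0) has small y and z, and tauY, tauY_inv turn z and y x into first
  coordinates, so y = z = 0. Thus both coordinate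
  sets are finite, and as z is a root of a quadratic determined by x and y, the orbit is finite.
*)

lemma kappa_eq: "kappa (x, y, z) = x\<^sup>2 + y\<^sup>2 + z\<^sup>2 - x * y * z - 2"
  by (simp add: kappa_def)

lemma kappa_perm: "kappa (y, x, z) = kappa (x, y, z)" "kappa (x, z, y) = kappa (x, y, z)"
  by (simp_all add: kappa_eq algebra_simps)

lemma kappa_sum_squares:
  "4 * (kappa (x, y, z) + 2 - x\<^sup>2) = (2 * y - x * z)\<^sup>2 + (4 - x\<^sup>2) * z\<^sup>2"
  by (simp add: kappa_eq power2_eq_square algebra_simps)

lemma sq_le_4_iff: "(x::real)\<^sup>2 \<le> 4 \<longleftrightarrow> -2 \<le> x \<and> x \<le> 2"
  using power2_le_iff_abs_le[of 2 x] by (auto simp: abs_le_iff)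

lemma kappa_level_sq_le:
  assumes "kappa (x, y, z) = k" "k < 2" "x\<^sup>2 \<le> 4"
  shows "z\<^sup>2 \<le> k + 2"
proof -
  have "4 * (k + 2 - x\<^sup>2) = (2 * y - x * z)\<^sup>2 + (4 - x\<^sup>2) * z\<^sup>2"
    using kappa_sum_squares[of x y z] assms(1) by simp
  then have "(4 - x\<^sup>2) * z\<^sup>2 \<le> 4 * (k + 2 - x\<^sup>2)"
    using zero_le_power2[of "2 * y - x * z"] by linarith
  then have key: "(2 - k) * x\<^sup>2 \<le> (4 - x\<^sup>2) * (k + 2 - z\<^sup>2)"
    by (simp add: algebra_simps)
  have "x\<^sup>2 \<noteq> 4"
  proof
    assume "x\<^sup>2 = 4"
    with key assms(2) show False
      by simp
  qed
  with assms(3) have "0 < 4 - x\<^sup>2"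
    by simp
  moreover have "0 \<le> (2 - k) * x\<^sup>2"
    using assms(2) by simp
  with key have "0 \<le> (4 - x\<^sup>2) * (k + 2 - z\<^sup>2)"
    by linarith
  ultimately show ?thesis
    by (simp add: zero_le_mult_iff)
qed

lemma mem_E_k: "(x, y, z) \<in> E_k k \<longleftrightarrow>
    x\<^sup>2 \<le> 4 \<and> y\<^sup>2 \<le> 4 \<and> z\<^sup>2 \<le> 4 \<and> -2 \<le> k \<and> k \<le> 2 \<and> kappa (x, y, z) = k"
  by (auto simp: E_k_def E_def sq_le_4_iff)

lemma mem_E_k_iff:
  assumes "k < 2"
  shows "(x, y, z) \<in> E_k k \<longleftrightarrow> -2 \<le> k \<and> x\<^sup>2 \<le> 4 \<and> kappa (x, y, z) = k"
proof -
  have "y\<^sup>2 \<le> k + 2" "z\<^sup>2 \<le> k + 2" if "x\<^sup>2 \<le> 4" "kappa (x, y, z) = k"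
    using kappa_level_sq_le[of x y z] kappa_level_sq_le[of x z y] that assms
    by (simp_all add: kappa_perm)
  with assms show ?thesis
    unfolding mem_E_k by auto
qed

lemma E_k_sq_le:
  assumes "(x, y, z) \<in> E_k k"
  shows "x\<^sup>2 \<le> k + 2"
proof (cases "k = 2")
  case True
  with assms show ?thesis
    by (simp add: mem_E_k)
next
  case False
  with assms have "kappa (y, z, x) = k" "k < 2" "y\<^sup>2 \<le> 4"
    by (auto simp: mem_E_k kappa_eq algebra_simps)
  then show ?thesis
    by (rule kappa_level_sq_le)
qed

lemma E_k_abs_lt_2: "(x, y, z) \<in> E_k k \<Longrightarrow> k < 2 \<Longrightarrow> \<bar>x\<bar> < 2"
  using E_k_sq_le[of x y z k] power2_less_imp_less[of "\<bar>x\<bar>" 2] by simp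

lemma E_k_yz_sq_le:
  assumes "(x, y, z) \<in> E_k k"
  shows "(2 - k) * y\<^sup>2 \<le> 4 * (k + 2 - x\<^sup>2)" "(2 - k) * z\<^sup>2 \<le> 4 * (k + 2 - x\<^sup>2)"
proof -
  have "(2 - k) * z\<^sup>2 \<le> 4 * (k + 2 - x\<^sup>2)" if "(x, y, z) \<in> E_k k" for y z
  proof -
    have "(2 - k) * z\<^sup>2 \<le> (4 - x\<^sup>2) * z\<^sup>2"
      using E_k_sq_le[OF that] by (intro mult_right_mono) auto
    also have "\<dots> \<le> 4 * (k + 2 - x\<^sup>2)"
      using kappa_sum_squares[of x y z] that zero_le_power2[of "2 * y - x * z"]
      by (simp add: mem_E_k)
    finally show ?thesis .
  qed
  moreover have "(x, z, y) \<in> E_k k"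
    using assms by (simp add: mem_E_k kappa_perm)
  ultimately show "(2 - k) * y\<^sup>2 \<le> 4 * (k + 2 - x\<^sup>2)" "(2 - k) * z\<^sup>2 \<le> 4 * (k + 2 - x\<^sup>2)"
    using assms by blast+
qed

lemma E_k_pole:
  assumes "(x, y, z) \<in> E_k k" "k < 2" "x\<^sup>2 = k + 2"
  shows "y = 0" "z = 0"
  using E_k_yz_sq_le[OF assms(1)] assms(2,3) by (simp_all add: mult_le_0_iff)

lemma kappa_tauX: "kappa (tauX p) = kappa p"
  and kappa_tauX_inv: "kappa (tauX_inv p) = kappa p"
  by (cases p; simp add: tauX_def tauX_inv_def kappa_eq power2_eq_square algebra_simps)+

definition swap_xy :: "real \<times> real \<times> real \<Rightarrow> real \<times> real \<times> real" where
  "swap_xy = (\<lambda>(x, y, z). (y, x, z))"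

lemma swap_xy_apply [simp]: "swap_xy (x, y, z) = (y, x, z)"
  by (simp add: swap_xy_def)

lemma swap_xy_swap_xy [simp]: "swap_xy (swap_xy p) = p"
  by (cases p) simp

lemma swap_xy_image_swap_xy_image [simp]: "swap_xy ` swap_xy ` C = C"
  by (simp add: image_image)

lemma swap_xy_mem_E_k [simp]: "swap_xy p \<in> E_k k \<longleftrightarrow> p \<in> E_k k"
  by (cases p) (auto simp: mem_E_k kappa_perm)

lemma swap_xy_image_E_k [simp]: "swap_xy ` E_k k = E_k k"
proof
  show "E_k k \<subseteq> swap_xy ` E_k k"
  proof
    fix p assume "p \<in> E_k k"
    then have "swap_xy (swap_xy p) \<in> swap_xy ` E_k k"
      by (intro imageI) simp
    then show "p \<in> swap_xy ` E_k k"
      by simp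
  qed
qed (simp add: image_subset_iff)

lemma tauY_conv_swap_xy: "tauY p = swap_xy (tauX (swap_xy p))"
  and tauY_inv_conv_swap_xy: "tauY_inv p = swap_xy (tauX_inv (swap_xy p))"
  by (cases p; simp add: tauX_def tauY_def tauX_inv_def tauY_inv_def)+

lemma continuous_swap_xy: "continuous_on UNIV swap_xy"
  unfolding swap_xy_def case_prod_unfold by (intro continuous_intros)

lemma closed_swap_xy_image: "closed C \<Longrightarrow> closed (swap_xy ` C)"
proof -
  assume "closed C"
  moreover have "swap_xy ` C = swap_xy -` C"
    by (force simp: image_iff)
  ultimately show ?thesis
    by (simp add: closed_vimage continuous_swap_xy)
qed

definition Gamma_invariant :: "(real \<times> real \<times> real) set \<Rightarrow> bool" where
  "Gamma_invariant C \<longleftrightarrow> tauX ` C \<subseteq> C \<and> tauX_inv ` C \<subseteq> C \<and> tauY ` C \<subseteq> C \<and> tauY_inv ` C \<subseteq> C"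

lemma Gamma_invariant_swap_xy_image:
  assumes "Gamma_invariant C"
  shows "Gamma_invariant (swap_xy ` C)"
proof -
  have "tauX ` swap_xy ` C = swap_xy ` tauY ` C" "tauX_inv ` swap_xy ` C = swap_xy ` tauY_inv ` C"
    "tauY ` swap_xy ` C = swap_xy ` tauX ` C" "tauY_inv ` swap_xy ` C = swap_xy ` tauX_inv ` C"
    by (simp_all add: image_image tauY_conv_swap_xy tauY_inv_conv_swap_xy)
  with assms show ?thesis
    unfolding Gamma_invariant_def by (simp add: image_mono)
qed

lemma Gamma_invariant_E_k:
  assumes "k < 2"
  shows "Gamma_invariant (E_k k)"
proof -
  have X: "tauX p \<in> E_k k \<and> tauX_inv p \<in> E_k k" if "p \<in> E_k k" for p
    using that kappa_tauX[of p] kappa_tauX_inv[of p] assms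
    by (cases p) (simp add: mem_E_k_iff tauX_def tauX_inv_def)
  have "tauY p \<in> E_k k \<and> tauY_inv p \<in> E_k k" if "p \<in> E_k k" for p
    using X[of "swap_xy p"] that by (simp add: tauY_conv_swap_xy tauY_inv_conv_swap_xy)
  with X show ?thesis
    unfolding Gamma_invariant_def by blast
qed

lemma Gamma_invariant_Gamma_orbit: "Gamma_invariant (Gamma_orbit p)"
  unfolding Gamma_invariant_def by (blast intro: Gamma_orbit.intros)

lemma Gamma_orbit_subset:
  assumes "Gamma_invariant C" "p \<in> C"
  shows "Gamma_orbit p \<subseteq> C"
proof
  fix q assume "q \<in> Gamma_orbit p"
  then show "q \<in> C"
    by induction (use assms in \<open>auto simp: Gamma_invariant_def\<close>)
qed

lemma continuous_tau:
  "continuous_on UNIV tauX" "continuous_on UNIV tauX_inv"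
  "continuous_on UNIV tauY" "continuous_on UNIV tauY_inv"
  unfolding tauX_def tauX_inv_def tauY_def tauY_inv_def case_prod_unfold
  by (intro continuous_intros)+

lemma Gamma_invariant_closure:
  assumes "Gamma_invariant C"
  shows "Gamma_invariant (closure C)"
proof -
  have "f ` closure C \<subseteq> closure C" if "continuous_on UNIV f" "f ` C \<subseteq> C" for f
  proof (rule image_closure_subset)
    show "continuous_on (closure C) f"
      using that(1) by (rule continuous_on_subset) simp
    show "f ` C \<subseteq> closure C"
      using that(2) closure_subset by blast
  qed simp
  with assms show ?thesis
    by (simp add: Gamma_invariant_def continuous_tau)
qed

lemma continuous_kappa: "continuous_on UNIV kappa"
  unfolding kappa_def case_prod_unfold by (intro continuous_intros)

lemma closed_E_k: "closed (E_k k)"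
proof (cases "-2 \<le> k \<and> k \<le> 2")
  case True
  then have "E_k k = ({-2..2} \<times> {-2..2} \<times> {-2..2}) \<inter> kappa -` {k}"
    by (auto simp: E_k_def E_def)
  then show ?thesis
    by (simp add: closed_Int closed_Times closed_vimage continuous_kappa)
next
  case False
  then have "E_k k = {}"
    by (auto simp: E_k_def E_def)
  then show ?thesis
    by simp
qed

definition rotation_angle :: "real \<Rightarrow> real" where
  "rotation_angle x = arccos (x / 2)"

definition slice_radius :: "real \<Rightarrow> real \<Rightarrow> real" where
  "slice_radius k x = sqrt (k + 2 - x\<^sup>2) / sin (rotation_angle x)"

definition slice_point :: "real \<Rightarrow> real \<Rightarrow> real \<Rightarrow> real \<times> real \<times> real" where
  "slice_point k x t = (x, slice_radius k x * sin t, slice_radius k x * sin (t + rotation_angle x))"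

lemma rotation_angle:
  assumes "\<bar>x\<bar> < 2"
  shows "cos (rotation_angle x) = x / 2" "0 < sin (rotation_angle x)"
    "0 < rotation_angle x" "rotation_angle x < pi"
proof -
  have "-1 < x / 2" "x / 2 < 1"
    using assms by auto
  then show "cos (rotation_angle x) = x / 2" "0 < rotation_angle x" "rotation_angle x < pi"
    by (simp_all add: rotation_angle_def cos_arccos arccos_lt_bounded)
  then show "0 < sin (rotation_angle x)"
    by (simp add: sin_gt_zero)
qed

lemma rotation_angle_0 [simp]: "rotation_angle 0 = pi / 2"
  by (simp add: rotation_angle_def)

lemma slice_radius_mult_sin:
  assumes "\<bar>x\<bar> < 2"
  shows "slice_radius k x * sin (rotation_angle x) = sqrt (k + 2 - x\<^sup>2)"
  using rotation_angle(2)[OF assms] by (simp add: slice_radius_def)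

lemma slice_radius_pos: "\<bar>x\<bar> < 2 \<Longrightarrow> x\<^sup>2 < k + 2 \<Longrightarrow> 0 < slice_radius k x"
  unfolding slice_radius_def by (intro divide_pos_pos) (simp_all add: rotation_angle(2))

lemma slice_point_0: "slice_point k 0 t = (0, sqrt (k + 2) * sin t, sqrt (k + 2) * cos t)"
  by (simp add: slice_point_def slice_radius_def sin_add)

lemma tauX_slice_point:
  assumes "\<bar>x\<bar> < 2"
  shows "tauX (slice_point k x t) = slice_point k x (t + rotation_angle x)"
    and "tauX_inv (slice_point k x t) = slice_point k x (t - rotation_angle x)"
proof -
  let ?\<theta> = "rotation_angle x"
  have "sin (u + ?\<theta>) + sin (u - ?\<theta>) = 2 * cos ?\<theta> * sin u" for u
    by (simp add: sin_add sin_diff)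
  from this[of "t + ?\<theta>"] this[of t] rotation_angle(1)[OF assms]
  have "sin (t + ?\<theta> + ?\<theta>) = x * sin (t + ?\<theta>) - sin t"
    and "sin (t - ?\<theta>) = x * sin t - sin (t + ?\<theta>)"
    by simp_all
  then show "tauX (slice_point k x t) = slice_point k x (t + ?\<theta>)"
    and "tauX_inv (slice_point k x t) = slice_point k x (t - ?\<theta>)"
    unfolding slice_point_def tauX_def tauX_inv_def prod.case
    by (simp_all add: right_diff_distrib mult.left_commute)
qed

lemma slice_point_periodic: "slice_point k x (t + 2 * pi * of_int j) = slice_point k x t"
proof -
  have "sin (u + 2 * pi * of_int j) = sin u" for u
    by (simp add: sin_add cos_int_2pin)
  from this[of t] this[of "t + rotation_angle x"] show ?thesis
    by (simp add: slice_point_def algebra_simps)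
qed

lemma E_k_slice_ellipse:
  assumes "(x, y, z) \<in> E_k k" "\<bar>x\<bar> < 2"
  shows "(z - x * y / 2)\<^sup>2 + (y * sin (rotation_angle x))\<^sup>2 = k + 2 - x\<^sup>2"
proof -
  have sin2: "(sin (rotation_angle x))\<^sup>2 = 1 - x\<^sup>2 / 4"
    unfolding sin_squared_eq rotation_angle(1)[OF assms(2)] by (simp add: power_divide)
  have "(z - x * y / 2)\<^sup>2 + (y * sin (rotation_angle x))\<^sup>2 = y\<^sup>2 + z\<^sup>2 - x * y * z"
    unfolding power_mult_distrib sin2 by (simp add: power2_eq_square algebra_simps)
  with assms(1) show ?thesis
    by (simp add: mem_E_k kappa_eq)
qed

lemma E_k_eq_slice_point:
  assumes p: "(x, y, z) \<in> E_k k" and "k < 2"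
  obtains t where "(x, y, z) = slice_point k x t"
proof -
  have "\<bar>x\<bar> < 2"
    using E_k_abs_lt_2[OF assms] .
  let ?\<theta> = "rotation_angle x" and ?R = "slice_radius k x"
  define \<rho> where "\<rho> = sqrt (k + 2 - x\<^sup>2)"
  have R\<rho>: "?R * sin ?\<theta> = \<rho>"
    unfolding \<rho>_def by (rule slice_radius_mult_sin[OF \<open>\<bar>x\<bar> < 2\<close>])
  have \<theta>: "cos ?\<theta> = x / 2" "0 < sin ?\<theta>"
    using rotation_angle[OF \<open>\<bar>x\<bar> < 2\<close>] by simp_all
  show ?thesis
  proof (cases "x\<^sup>2 = k + 2")
    case True
    then have "y = 0" "z = 0" "?R = 0"
      using E_k_pole[OF p assms(2)] by (simp_all add: slice_radius_def)
    then show ?thesis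
      by (intro that[of 0]) (simp add: slice_point_def)
  next
    case False
    then have "0 < \<rho>"
      using E_k_sq_le[OF p] by (simp add: \<rho>_def)
    have "((z - x * y / 2) / \<rho>)\<^sup>2 + (y * sin ?\<theta> / \<rho>)\<^sup>2 = 1"
      using E_k_slice_ellipse[OF p \<open>\<bar>x\<bar> < 2\<close>] E_k_sq_le[OF p] \<open>0 < \<rho>\<close>
      by (simp add: \<rho>_def power_divide add_divide_distrib[symmetric])
    then obtain t where t: "(z - x * y / 2) / \<rho> = cos t" "y * sin ?\<theta> / \<rho> = sin t"
      by (rule sincos_total_2pi)
    have "?R * sin t * sin ?\<theta> = y * sin ?\<theta>"
      using t(2) R\<rho> \<open>0 < \<rho>\<close> by (simp add: field_simps)
    then have "?R * sin t = y"
      using \<theta>(2) by simp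
    moreover have "?R * sin (t + ?\<theta>) = z"
    proof -
      have "?R * sin (t + ?\<theta>) = ?R * sin t * cos ?\<theta> + ?R * sin ?\<theta> * cos t"
        by (simp add: sin_add algebra_simps)
      also have "\<dots> = z"
        using \<open>?R * sin t = y\<close> R\<rho> t(1) \<open>0 < \<rho>\<close> unfolding \<theta>(1)
        by (simp add: field_simps)
      finally show ?thesis .
    qed
    ultimately show ?thesis
      by (intro that[of t]) (simp add: slice_point_def)
  qed
qed

lemma isCont_slice_point:
  assumes "\<bar>a\<bar> < 2"
  shows "isCont (\<lambda>(x, t). slice_point k x t) (a, t)"
proof -
  let ?S = "{-2<..<2::real} \<times> (UNIV :: real set)"
  have "sin (arccos (fst p / 2)) \<noteq> 0" "-1 \<le> fst p / 2" "fst p / 2 \<le> 1"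
    if "p \<in> ?S" for p :: "real \<times> real"
    using that rotation_angle(2)[of "fst p"] by (auto simp: rotation_angle_def abs_less_iff)
  then have "continuous_on ?S (\<lambda>(x, t). slice_point k x t)"
    unfolding slice_point_def slice_radius_def rotation_angle_def case_prod_unfold
    by (intro continuous_intros) auto
  moreover have "open ?S" "(a, t) \<in> ?S"
    using assms by (auto intro: open_Times)
  ultimately show ?thesis
    using continuous_on_eq_continuous_at by blast
qed

lemma slice_point_approx:
  assumes "\<bar>a\<bar> < 2" "0 < e"
  obtains d where "0 < d"
    "\<And>x t'. \<bar>x - a\<bar> < d \<Longrightarrow> \<bar>t' - t\<bar> < d \<Longrightarrow> dist (slice_point k x t') (slice_point k a t) < e"
proof -
  have "\<exists>d>0. \<forall>p. dist p (a, t) < d \<longrightarrow>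
      dist ((\<lambda>(x, t). slice_point k x t) p) (slice_point k a t) < e"
    using isCont_slice_point[OF assms(1), where k = k and t = t] assms(2)
    unfolding continuous_at_eps_delta by simp
  then obtain d where "0 < d" and d: "\<And>p. dist p (a, t) < d \<Longrightarrow>
      dist ((\<lambda>(x, t). slice_point k x t) p) (slice_point k a t) < e"
    by blast
  show ?thesis
  proof (rule that[of "d / 2"])
    fix x t' assume "\<bar>x - a\<bar> < d / 2" "\<bar>t' - t\<bar> < d / 2"
    moreover have "dist (x, t') (a, t) \<le> \<bar>x - a\<bar> + \<bar>t' - t\<bar>"
      unfolding dist_Pair_Pair dist_real_def power2_abs by (rule sqrt_sum_squares_le_sum_abs)
    ultimately show "dist (slice_point k x t') (slice_point k a t) < e"
      using d[of "(x, t')"] by simp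
  qed (use \<open>0 < d\<close> in simp)
qed

(* Contains every x at which the rotation by rotation_angle x has finite order at most N. *)
definition torsion_traces :: "nat \<Rightarrow> real set" where
  "torsion_traces N = (\<lambda>(n, j). 2 * cos (2 * pi * real j / real n)) ` ({1..N} \<times> {0..N})"

lemma finite_torsion_traces: "finite (torsion_traces N)"
  by (simp add: torsion_traces_def)

lemma rotation_angle_not_torsion:
  assumes x: "\<bar>x\<bar> < 2" "x \<notin> torsion_traces N" and n: "1 \<le> n" "n \<le> int N"
  shows "of_int n * (rotation_angle x / (2 * pi)) \<notin> \<int>"
proof
  assume "of_int n * (rotation_angle x / (2 * pi)) \<in> \<int>"
  then obtain j where j: "of_int n * (rotation_angle x / (2 * pi)) = of_int j"
    by (auto elim: Ints_cases)
  note \<theta> = rotation_angle[OF x(1)]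
  have "0 < of_int n * (rotation_angle x / (2 * pi))"
    using \<theta> n by simp
  then have "0 \<le> j"
    using j by simp
  have "of_int n * (rotation_angle x / (2 * pi)) \<le> of_int n * (1 / 2)"
    using \<theta> n by (intro mult_left_mono) (auto simp: field_simps)
  then have "j \<le> int N"
    using j n by linarith
  have "rotation_angle x = 2 * pi * real (nat j) / real (nat n)"
    using j n \<open>0 \<le> j\<close> by (simp add: field_simps)
  then have "x \<in> torsion_traces N"
    unfolding torsion_traces_def using \<theta>(1) n \<open>0 \<le> j\<close> \<open>j \<le> int N\<close>
    by (intro image_eqI[where x = "(nat n, nat j)"]) auto
  with x(2) show False ..
qed

lemma Dirichlet_approx_dense:
  fixes \<theta> u :: real and N :: nat
  assumes "0 < N" and not_int: "\<And>n::int. 1 \<le> n \<Longrightarrow> n \<le> int N \<Longrightarrow> of_int n * \<theta> \<notin> \<int>"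
  obtains m j :: int where "\<bar>of_int m * \<theta> - of_int j - u\<bar> < 1 / N"
proof -
  obtain h n where n: "0 < n" "n \<le> int N" and hn: "\<bar>of_int n * \<theta> - of_int h\<bar> < 1 / N"
    using Dirichlet_approx[OF assms(1)] by blast
  define \<delta> where "\<delta> = of_int n * \<theta> - of_int h"
  have "\<delta> \<noteq> 0"
    using not_int[of n] n by (auto simp: \<delta>_def)
  define m where "m = \<lfloor>u / \<delta>\<rfloor>"
  have "\<bar>of_int m - u / \<delta>\<bar> < 1"
    unfolding m_def by linarith
  then have "\<bar>\<delta>\<bar> * \<bar>of_int m - u / \<delta>\<bar> < \<bar>\<delta>\<bar> * 1"
    using \<open>\<delta> \<noteq> 0\<close> by (intro mult_strict_left_mono) auto
  then have "\<bar>of_int m * \<delta> - u\<bar> < \<bar>\<delta>\<bar>"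
    using \<open>\<delta> \<noteq> 0\<close> by (simp add: abs_mult[symmetric] algebra_simps)
  also have "\<bar>\<delta>\<bar> < 1 / N"
    using hn by (simp add: \<delta>_def)
  finally have "\<bar>of_int m * \<delta> - u\<bar> < 1 / N" .
  moreover have "of_int m * \<delta> = of_int (m * n) * \<theta> - of_int (m * h)"
    by (simp add: \<delta>_def algebra_simps)
  ultimately show ?thesis
    by (intro that[of "m * n" "m * h"]) simp
qed

lemma rotation_orbit_approx:
  assumes "\<bar>x\<bar> < 2" "x \<notin> torsion_traces N" "0 < N"
  obtains m j :: int
  where "\<bar>t0 + of_int m * rotation_angle x + 2 * pi * of_int j - t\<bar> < 2 * pi / N"
proof -
  obtain m j :: int where
    mj: "\<bar>of_int m * (rotation_angle x / (2 * pi)) - of_int j - (t - t0) / (2 * pi)\<bar> < 1 / N"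
    using Dirichlet_approx_dense[OF assms(3) rotation_angle_not_torsion[OF assms(1,2)]] .
  have "t0 + of_int m * rotation_angle x + 2 * pi * of_int (- j) - t
      = 2 * pi * (of_int m * (rotation_angle x / (2 * pi)) - of_int j - (t - t0) / (2 * pi))"
    by (simp add: field_simps)
  then have "\<bar>t0 + of_int m * rotation_angle x + 2 * pi * of_int (- j) - t\<bar>
      = 2 * pi * \<bar>of_int m * (rotation_angle x / (2 * pi)) - of_int j - (t - t0) / (2 * pi)\<bar>"
    by (simp add: abs_mult)
  also have "\<dots> < 2 * pi * (1 / N)"
    using mj by (intro mult_strict_left_mono) auto
  finally show ?thesis
    by (intro that[of m "- j"]) simp
qed

lemma slice_point_tauX_orbit:
  assumes "tauX ` C \<subseteq> C" "tauX_inv ` C \<subseteq> C" "\<bar>x\<bar> < 2" "slice_point k x t \<in> C"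
  shows "slice_point k x (t + of_int m * rotation_angle x) \<in> C"
proof (induction m rule: int_induct[where k = 0])
  case base
  show ?case
    using assms(4) by simp
next
  case (step1 i)
  then have "tauX (slice_point k x (t + of_int i * rotation_angle x)) \<in> C"
    using assms(1) by blast
  then show ?case
    by (simp add: tauX_slice_point(1)[OF assms(3)] algebra_simps)
next
  case (step2 i)
  then have "tauX_inv (slice_point k x (t + of_int i * rotation_angle x)) \<in> C"
    using assms(2) by blast
  then show ?case
    by (simp add: tauX_slice_point(2)[OF assms(3)] algebra_simps)
qed

lemma islimpt_Diff_finite:
  fixes a :: "'a::t1_space"
  assumes "a islimpt S" "finite T"
  shows "a islimpt S - T"
proof -
  have "a islimpt T \<union> (S - T)"
    using assms(1) by (rule islimpt_subset) auto
  with assms(2) show ?thesis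
    by (simp only: islimpt_Un_finite)
qed

lemma tauX_orbit_approx_slice_point:
  assumes "k < 2" "C \<subseteq> E_k k" "tauX ` C \<subseteq> C" "tauX_inv ` C \<subseteq> C"
    and "(x, y, z) \<in> C" "x \<notin> torsion_traces N" "0 < N"
  obtains t' where "slice_point k x t' \<in> C" "\<bar>t' - t\<bar> < 2 * pi / N"
proof -
  have "(x, y, z) \<in> E_k k"
    using assms(2,5) by blast
  then have "\<bar>x\<bar> < 2"
    using E_k_abs_lt_2 assms(1) by blast
  obtain t0 where t0: "(x, y, z) = slice_point k x t0"
    using E_k_eq_slice_point \<open>(x, y, z) \<in> E_k k\<close> assms(1) by blast
  obtain m j :: int
    where "\<bar>t0 + of_int m * rotation_angle x + 2 * pi * of_int j - t\<bar> < 2 * pi / N"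
    using rotation_orbit_approx[OF \<open>\<bar>x\<bar> < 2\<close> assms(6,7)] .
  moreover have "slice_point k x (t0 + of_int m * rotation_angle x + 2 * pi * of_int j) \<in> C"
    using slice_point_tauX_orbit[OF assms(3,4) \<open>\<bar>x\<bar> < 2\<close>] assms(5) t0
    by (simp add: slice_point_periodic)
  ultimately show ?thesis
    using that by blast
qed

lemma slice_point_mem_if_limit_point:
  assumes "k < 2" "closed C" "C \<subseteq> E_k k" "tauX ` C \<subseteq> C" "tauX_inv ` C \<subseteq> C"
    and a: "\<bar>a\<bar> < 2" "a islimpt fst ` C"
  shows "slice_point k a t \<in> C"
proof -
  have "\<exists>q\<in>C. dist q (slice_point k a t) < e" if e: "0 < e" for e
  proof -
    obtain d where "0 < d" and d: "\<And>x t'. \<bar>x - a\<bar> < d \<Longrightarrow> \<bar>t' - t\<bar> < d \<Longrightarrow>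
        dist (slice_point k x t') (slice_point k a t) < e"
      using slice_point_approx[OF a(1) e] by blast
    obtain N :: nat where N: "2 * pi / d < N"
      using reals_Archimedean2 by blast
    then have "0 < N"
      using \<open>0 < d\<close> pi_gt_zero by (auto simp: field_simps intro: gr0I)
    with N \<open>0 < d\<close> have "2 * pi / N < d"
      by (simp add: field_simps)
    have "a islimpt fst ` C - torsion_traces N"
      using a(2) finite_torsion_traces by (rule islimpt_Diff_finite)
    then obtain x where x: "x \<in> fst ` C" "x \<notin> torsion_traces N" "\<bar>x - a\<bar> < d"
      using \<open>0 < d\<close> unfolding islimpt_approachable dist_real_def by blast
    then obtain y z where "(x, y, z) \<in> C"
      by force
    then obtain t' where "slice_point k x t' \<in> C" "\<bar>t' - t\<bar> < 2 * pi / N"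
      using tauX_orbit_approx_slice_point[OF assms(1,3,4,5) _ x(2) \<open>0 < N\<close>] by blast
    moreover have "dist (slice_point k x t') (slice_point k a t) < e"
      using \<open>\<bar>t' - t\<bar> < 2 * pi / N\<close> \<open>2 * pi / N < d\<close> x(3) by (intro d) auto
    ultimately show ?thesis
      by blast
  qed
  then have "slice_point k a t \<in> closure C"
    unfolding closure_approachable by blast
  with assms(2) show ?thesis
    by simp
qed

lemma islimpt_range_scaled_sin:
  fixes c r :: real
  assumes "\<bar>c\<bar> < r"
  shows "c islimpt range (\<lambda>t. r * sin t)"
proof -
  have "{-r..r} \<subseteq> range (\<lambda>t. r * sin t)"
  proof
    fix b assume "b \<in> {-r..r}"
    then have "-1 \<le> b / r" "b / r \<le> 1"
      using assms by (auto simp: field_simps)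
    then have "b = r * sin (arcsin (b / r))"
      using assms by simp
    then show "b \<in> range (\<lambda>t. r * sin t)"
      by blast
  qed
  moreover have "c \<in> interior {-r..r}"
    using assms by auto
  ultimately have "c \<in> interior (range (\<lambda>t. r * sin t))"
    using interior_mono by blast
  then show ?thesis
    by (rule interior_limit_point)
qed

lemma pole_eq_tauY_slice_point_0:
  assumes "-2 \<le> k" "x\<^sup>2 = k + 2"
  obtains t where "(x, 0, 0) = tauY (slice_point k 0 t)"
proof -
  define s where "s = sqrt (k + 2)"
  have "x\<^sup>2 = s\<^sup>2"
    using assms by (simp add: s_def)
  then have "x = s * cos 0 \<or> x = s * cos pi"
    using power2_eq_iff[of x s] by simp
  then obtain t where "x = s * cos t" "sin t = 0"
    by (metis sin_zero sin_pi)
  then show ?thesis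
    by (intro that[of t]) (simp add: slice_point_0 tauY_def s_def)
qed

lemma E_k_subset_if_inner_slices:
  assumes "-2 < k" "k < 2" "tauY ` C \<subseteq> C"
    and slices: "\<And>x t. \<bar>x\<bar> < sqrt (k + 2) \<Longrightarrow> slice_point k x t \<in> C"
  shows "E_k k \<subseteq> C"
proof
  fix p assume "p \<in> E_k k"
  then obtain x y z where p: "p = (x, y, z)" "(x, y, z) \<in> E_k k"
    by (cases p) auto
  show "p \<in> C"
  proof (cases "x\<^sup>2 < k + 2")
    case True
    then have "\<bar>x\<bar> < sqrt (k + 2)"
      using real_sqrt_less_mono[of "x\<^sup>2" "k + 2"] by simp
    obtain t where "(x, y, z) = slice_point k x t"
      using E_k_eq_slice_point p(2) assms(2) by blast
    then show ?thesis
      using slices \<open>\<bar>x\<bar> < sqrt (k + 2)\<close> p(1) by simp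
  next
    case False
    then have "x\<^sup>2 = k + 2"
      using E_k_sq_le[OF p(2)] by simp
    moreover have "y = 0" "z = 0"
      using E_k_pole[OF p(2) assms(2) \<open>x\<^sup>2 = k + 2\<close>] by simp_all
    ultimately obtain t where "p = tauY (slice_point k 0 t)"
      using pole_eq_tauY_slice_point_0[of k x] assms(1) p(1) by auto
    moreover have "slice_point k 0 t \<in> C"
      using slices assms(1) by simp
    ultimately show ?thesis
      using assms(3) by blast
  qed
qed

lemma E_k_subset_if_limit_point:
  assumes k: "-2 < k" "k < 2" and C: "closed C" "C \<subseteq> E_k k" "Gamma_invariant C"
    and a: "\<bar>a\<bar> < sqrt (k + 2)" "a islimpt fst ` C"
  shows "E_k k \<subseteq> C"
proof -
  have "sqrt (k + 2) < 2"
    using k real_sqrt_less_mono[of "k + 2" 4] by simp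
  then have slice: "slice_point k b t \<in> D"
    if "closed D" "D \<subseteq> E_k k" "Gamma_invariant D" "\<bar>b\<bar> < sqrt (k + 2)" "b islimpt fst ` D"
    for D b t
    using slice_point_mem_if_limit_point[of k D b t] that k unfolding Gamma_invariant_def by simp
  have C': "closed (swap_xy ` C)" "swap_xy ` C \<subseteq> E_k k" "Gamma_invariant (swap_xy ` C)"
    using C closed_swap_xy_image Gamma_invariant_swap_xy_image image_mono[OF C(2), of swap_xy]
    by simp_all
  have "a\<^sup>2 < k + 2"
    using a(1) k power_strict_mono[of "\<bar>a\<bar>" "sqrt (k + 2)" 2] by simp
  then have "0 < slice_radius k a"
    using a(1) \<open>sqrt (k + 2) < 2\<close> by (intro slice_radius_pos) auto
  moreover have "range (\<lambda>t. slice_radius k a * sin t) \<subseteq> fst ` swap_xy ` C"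
    using slice[OF C a] by (force simp: slice_point_def)
  ultimately have "0 islimpt fst ` swap_xy ` C"
    using islimpt_range_scaled_sin[of 0] islimpt_subset by force
  then have "slice_point k 0 t \<in> swap_xy ` C" for t
    using slice[OF C'] k by simp
  then have "swap_xy (slice_point k 0 t) \<in> C" for t
    by (metis imageI swap_xy_image_swap_xy_image)
  then have "range (\<lambda>t. sqrt (k + 2) * sin t) \<subseteq> fst ` C"
    by (force simp: slice_point_0)
  then have "slice_point k x t \<in> C" if "\<bar>x\<bar> < sqrt (k + 2)" for x t
    using slice[OF C that] islimpt_range_scaled_sin[OF that] islimpt_subset by blast
  then show ?thesis
    using E_k_subset_if_inner_slices k C(3) by (simp add: Gamma_invariant_def)
qed

lemma E_k_subset_if_limit_point_swap_xy:
  assumes k: "-2 < k" "k < 2" and C: "closed C" "C \<subseteq> E_k k" "Gamma_invariant C"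
    and a: "\<bar>a\<bar> < sqrt (k + 2)" "a islimpt fst ` swap_xy ` C"
  shows "E_k k \<subseteq> C"
proof -
  have "E_k k \<subseteq> swap_xy ` C"
    using C closed_swap_xy_image Gamma_invariant_swap_xy_image image_mono[OF C(2), of swap_xy]
    by (intro E_k_subset_if_limit_point[OF k _ _ _ a]) simp_all
  then show ?thesis
    by (metis image_mono swap_xy_image_E_k swap_xy_image_swap_xy_image)
qed

lemma yz_eq_0_if_zero_isolated:
  assumes Ob: "Ob \<subseteq> E_k k" "tauY ` Ob \<subseteq> Ob" "tauY_inv ` Ob \<subseteq> Ob"
    and gap: "\<And>u. u \<in> fst ` Ob \<Longrightarrow> \<bar>u\<bar> < \<delta> \<Longrightarrow> u = 0"
    and p: "(x, y, z) \<in> Ob" "x \<noteq> 0" "\<bar>y\<bar> < \<delta> / 2" "\<bar>z\<bar> < \<delta>"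
  shows "y = 0" "z = 0"
proof -
  have "tauY (x, y, z) \<in> Ob"
    using p(1) Ob(2) by blast
  then have "z \<in> fst ` Ob"
    by (force simp: tauY_def)
  then show "z = 0"
    using gap p(4) by blast
  have "tauY_inv (x, y, z) \<in> Ob"
    using p(1) Ob(3) by blast
  then have "y * x \<in> fst ` Ob"
    using \<open>z = 0\<close> by (force simp: tauY_inv_def)
  moreover have "\<bar>y * x\<bar> < \<delta>"
  proof -
    have "(x, y, z) \<in> E_k k"
      using p(1) Ob(1) by blast
    then have "\<bar>x\<bar> \<le> 2"
      by (simp add: mem_E_k sq_le_4_iff abs_le_iff)
    then have "\<bar>y * x\<bar> \<le> \<bar>y\<bar> * 2"
      by (simp add: abs_mult mult_left_mono)
    also have "\<dots> < \<delta>"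
      using p(3) by simp
    finally show ?thesis .
  qed
  ultimately have "y * x = 0"
    using gap by blast
  then show "y = 0"
    using p(2) by simp
qed

lemma E_k_yz_small_near_pole:
  assumes "(x, y, z) \<in> E_k k" "k < 2" "0 < \<delta>" "k + 2 - (2 - k) * \<delta>\<^sup>2 / 32 < x\<^sup>2"
  shows "\<bar>y\<bar> < \<delta> / 2" "\<bar>z\<bar> < \<delta> / 2"
proof -
  have "\<bar>v\<bar> < \<delta> / 2" if "(2 - k) * v\<^sup>2 \<le> 4 * (k + 2 - x\<^sup>2)" for v
  proof -
    have "(2 - k) * v\<^sup>2 < (2 - k) * (\<delta>\<^sup>2 / 8)"
      using that assms(4) by simp
    also have "\<dots> < (2 - k) * (\<delta> / 2)\<^sup>2"
      using assms(2,3) by (intro mult_strict_left_mono) (simp_all add: power_divide)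
    finally have "\<bar>v\<bar>\<^sup>2 < (\<delta> / 2)\<^sup>2"
      using assms(2) mult_left_less_imp_less[of "2 - k" "v\<^sup>2" "(\<delta> / 2)\<^sup>2"] by simp
    then show ?thesis
      by (rule power2_less_imp_less) (use assms(3) in simp)
  qed
  then show "\<bar>y\<bar> < \<delta> / 2" "\<bar>z\<bar> < \<delta> / 2"
    using E_k_yz_sq_le[OF assms(1)] by blast+
qed

lemma fst_sq_eq_if_near_pole:
  assumes "k < 2" "0 < \<delta>" and Ob: "Ob \<subseteq> E_k k" "tauY ` Ob \<subseteq> Ob" "tauY_inv ` Ob \<subseteq> Ob"
    and gap: "\<And>u. u \<in> fst ` Ob \<Longrightarrow> \<bar>u\<bar> < \<delta> \<Longrightarrow> u = 0"
    and p: "(x, y, z) \<in> Ob" "x \<noteq> 0" "k + 2 - (2 - k) * \<delta>\<^sup>2 / 32 < x\<^sup>2"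
  shows "x\<^sup>2 = k + 2"
proof -
  have pE: "(x, y, z) \<in> E_k k"
    using p(1) Ob(1) by blast
  then have "\<bar>y\<bar> < \<delta> / 2" "\<bar>z\<bar> < \<delta>"
    using E_k_yz_small_near_pole[OF pE assms(1,2) p(3)] assms(2) by auto
  then have "y = 0" "z = 0"
    using yz_eq_0_if_zero_isolated[OF Ob gap p(1,2)] by auto
  with pE show ?thesis
    by (simp add: mem_E_k kappa_eq)
qed

lemma finite_fst_image_if_no_limit_point:
  assumes k: "-2 < k" "k < 2" and Ob: "Ob \<subseteq> E_k k" "tauY ` Ob \<subseteq> Ob" "tauY_inv ` Ob \<subseteq> Ob"
    and no_limpt: "\<And>a. \<bar>a\<bar> < sqrt (k + 2) \<Longrightarrow> \<not> a islimpt fst ` Ob"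
  shows "finite (fst ` Ob)"
proof -
  define s where "s = sqrt (k + 2)"
  have "0 < s" "s\<^sup>2 = k + 2"
    using k by (simp_all add: s_def)
  have "\<not> 0 islimpt fst ` Ob"
    using no_limpt \<open>0 < s\<close> by (simp add: s_def)
  then obtain \<delta> where "0 < \<delta>" and gap: "\<And>u. u \<in> fst ` Ob \<Longrightarrow> \<bar>u\<bar> < \<delta> \<Longrightarrow> u = 0"
    unfolding islimpt_approachable dist_real_def by auto
  define r where "r = sqrt (k + 2 - (2 - k) * \<delta>\<^sup>2 / 32)"
  have "r < s"
    using k \<open>0 < \<delta>\<close> by (simp add: r_def s_def)
  have "fst ` Ob \<subseteq> (cball 0 r \<inter> fst ` Ob) \<union> {0, s, -s}"
  proof
    fix x assume "x \<in> fst ` Ob"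
    then obtain y z where p: "(x, y, z) \<in> Ob"
      by force
    show "x \<in> (cball 0 r \<inter> fst ` Ob) \<union> {0, s, -s}"
    proof (cases "\<bar>x\<bar> \<le> r \<or> x = 0")
      case True
      with \<open>x \<in> fst ` Ob\<close> show ?thesis
        by auto
    next
      case False
      then have "k + 2 - (2 - k) * \<delta>\<^sup>2 / 32 < x\<^sup>2"
        using real_sqrt_less_iff[of "k + 2 - (2 - k) * \<delta>\<^sup>2 / 32" "x\<^sup>2"]
        by (simp add: r_def)
      then have "x\<^sup>2 = s\<^sup>2"
        using fst_sq_eq_if_near_pole[OF k(2) \<open>0 < \<delta>\<close> Ob gap p] False \<open>s\<^sup>2 = k + 2\<close> by simp
      then show ?thesis
        using power2_eq_iff[of x s] by blast
    qed
  qed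
  moreover have "finite (cball 0 r \<inter> fst ` Ob)"
  proof (rule finite_not_islimpt_in_compact)
    fix u :: real assume "u \<in> cball 0 r"
    then have "\<bar>u\<bar> < sqrt (k + 2)"
      using \<open>r < s\<close> by (simp add: s_def)
    then show "\<not> u islimpt fst ` Ob"
      by (rule no_limpt)
  qed simp
  ultimately show ?thesis
    by (rule finite_subset[OF _ finite_UnI]) simp
qed

lemma finite_quadratic_roots: "finite {z :: real. z\<^sup>2 - b * z + c = 0}"
proof (rule finite_subset)
  show "{z. z\<^sup>2 - b * z + c = 0} \<subseteq> {(b + sqrt (b\<^sup>2 - 4 * c)) / 2, (b - sqrt (b\<^sup>2 - 4 * c)) / 2}"
  proof
    fix z assume "z \<in> {z. z\<^sup>2 - b * z + c = 0}"
    then have "(2 * z - b)\<^sup>2 = b\<^sup>2 - 4 * c"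
      by (simp add: power2_eq_square algebra_simps)
    then have "\<bar>2 * z - b\<bar> = sqrt (b\<^sup>2 - 4 * c)"
      by (metis real_sqrt_abs)
    then show "z \<in> {(b + sqrt (b\<^sup>2 - 4 * c)) / 2, (b - sqrt (b\<^sup>2 - 4 * c)) / 2}"
      by (auto simp: abs_if split: if_splits)
  qed
qed simp

lemma finite_if_finite_coords:
  assumes "Ob \<subseteq> E_k k" "finite (fst ` Ob)" "finite (fst ` swap_xy ` Ob)"
  shows "finite Ob"
proof (rule finite_subset)
  let ?Z = "\<lambda>(x, y). (\<lambda>z. (x, y, z)) ` {z. z\<^sup>2 - x * y * z + (x\<^sup>2 + y\<^sup>2 - 2 - k) = 0}"
  show "Ob \<subseteq> (\<Union>xy \<in> fst ` Ob \<times> fst ` swap_xy ` Ob. ?Z xy)"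
  proof
    fix p assume "p \<in> Ob"
    obtain x y z where p: "p = (x, y, z)"
      by (cases p)
    have "x \<in> fst ` Ob" "y \<in> fst ` swap_xy ` Ob"
      using \<open>p \<in> Ob\<close> unfolding p by (force, force)
    moreover have "z\<^sup>2 - x * y * z + (x\<^sup>2 + y\<^sup>2 - 2 - k) = 0"
      using \<open>p \<in> Ob\<close> assms(1) unfolding p by (auto simp: mem_E_k kappa_eq)
    ultimately show "p \<in> (\<Union>xy \<in> fst ` Ob \<times> fst ` swap_xy ` Ob. ?Z xy)"
      unfolding p by (intro UN_I[of "(x, y)"]) auto
  qed
  have "finite (?Z xy)" for xy
    by (cases xy) (simp only: case_prod_conv finite_imageI finite_quadratic_roots)
  then show "finite (\<Union>xy \<in> fst ` Ob \<times> fst ` swap_xy ` Ob. ?Z xy)"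
    using assms(2,3) by (intro finite_UN_I finite_cartesian_product)
qed

lemma finite_if_no_limit_points:
  assumes k: "-2 < k" "k < 2" and Ob: "Ob \<subseteq> E_k k" "Gamma_invariant Ob"
    and "\<And>a. \<bar>a\<bar> < sqrt (k + 2) \<Longrightarrow> \<not> a islimpt fst ` Ob"
    and "\<And>a. \<bar>a\<bar> < sqrt (k + 2) \<Longrightarrow> \<not> a islimpt fst ` swap_xy ` Ob"
  shows "finite Ob"
proof (rule finite_if_finite_coords)
  show "finite (fst ` Ob)"
    using Ob assms(5) unfolding Gamma_invariant_def
    by (intro finite_fst_image_if_no_limit_point[OF k]) auto
  have "swap_xy ` Ob \<subseteq> E_k k" "Gamma_invariant (swap_xy ` Ob)"
    using image_mono[OF Ob(1), of swap_xy] Gamma_invariant_swap_xy_image[OF Ob(2)] by simp_all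
  then show "finite (fst ` swap_xy ` Ob)"
    using assms(6) unfolding Gamma_invariant_def
    by (intro finite_fst_image_if_no_limit_point[OF k]) auto
qed (use Ob in simp)

theorem proposition4p2:
  fixes k :: real and p0 :: "real \<times> real \<times> real"
  assumes "-2 < k" and "k < 2"
    and "p0 \<in> E_k k"
    and "infinite (Gamma_orbit p0)"
  shows "E_k k \<subseteq> closure (Gamma_orbit p0)"
proof -
  let ?O = "Gamma_orbit p0"
  have O: "?O \<subseteq> E_k k" "Gamma_invariant ?O"
    using Gamma_orbit_subset[OF Gamma_invariant_E_k[OF assms(2)] assms(3)]
      Gamma_invariant_Gamma_orbit by simp_all
  then have C: "closed (closure ?O)" "closure ?O \<subseteq> E_k k" "Gamma_invariant (closure ?O)"
    by (simp_all add: closure_minimal closed_E_k Gamma_invariant_closure)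
  obtain a where a: "\<bar>a\<bar> < sqrt (k + 2)"
    and "a islimpt fst ` ?O \<or> a islimpt fst ` swap_xy ` ?O"
    using finite_if_no_limit_points[OF assms(1,2) O] assms(4) by blast
  then have "a islimpt fst ` closure ?O \<or> a islimpt fst ` swap_xy ` closure ?O"
    using closure_subset by (meson image_mono islimpt_subset)
  then show ?thesis
    using E_k_subset_if_limit_point[OF assms(1,2) C a]
      E_k_subset_if_limit_point_swap_xy[OF assms(1,2) C a] by blast
qed

end
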